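(* Let $P$ be a discrete Dubins path, let $ab$ be a long edge of $P$ (traversed from $a$ to $b$), and let $P'$ be the part of $P$ from $b$ to its last vertex. For $\varepsilon\in[0,1]$ let $P(\varepsilon)$ be the path obtained from $P$ by rigidly translating $P'$ by the vector $\varepsilon(a-b)$ (towards $a$ along $ab$ by distance $\varepsilon|ab|$), so that the edge $ab$ is replaced by the segment from $a$ to $b+\varepsilon(a-b)$. Then there exists $\varepsilon>0$ such that $P(\varepsilon)$ is a discrete curvature-constrained path.
   Context: Fix an angle $\theta$ with $0\le\theta\le\pi/2$ such that $2\pi/\theta$ is an integer, and a length $\ell>0$. For a polygonal path, the turn at an internal vertex is the angle in $[0,\pi]$ between the direction of the incoming edge and the direction of the outgoing edge. An edge is short if its length is $<\ell$, normal if $=\ell$, long if $>\ell$. An edge $e$ with an adjacent edge at each end is an inflection edge if its two adjacent edges lie on opposite sides of the supporting line of $e$, and non-inflection otherwise. A discrete curvature-constrained path is a polygonal path such that: (i) the turn at every internal vertex is at most $\theta$; (ii) no two adjacent edges are both short; (iii) for every short non-inflection edge $ab$ with adjacent edges $a^-a$ and $bb^+$, the angle between the directions $\overrightarrow{a^-a}$ and $\overrightarrow{bb^+}$ is at most $\theta$. A configuration is a pair $(u,U)$ of a point $u$ and a vector $U$ of length $\ell$. A polygonal path $P$ with first vertex $u$ starts at $(u,U)$ if prepending the segment from $u-U$ to $u$ (the pre-edge) yields a discrete curvature-constrained path; $P$ with last vertex $v$ ends at $(v,V)$ if appending the segment from $v$ to $v+V$ (the post-edge) yields a discrete curvature-constrained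 path. A discrete Dubins path is a discrete curvature-constrained path of minimum length among all those starting at a given configuration $\mathcal U$ and ending at a given configuration $\mathcal V$. Standing assumption: paths make a non-zero turn at every internal vertex. *)

theory Defs
  imports "HOL-Analysis.Analysis"
begin

text \<open>Points in the Euclidean plane are elements of real^2. A polygonal path is the
  (non-empty) list of its vertices; its edges join consecutive vertices.\<close>

type_synonym pt = "real^2"

definition vec_angle :: "pt \<Rightarrow> pt \<Rightarrow> real" where
  "vec_angle u v = arccos ((u \<bullet> v) / (norm u * norm v))"

text \<open>Signed cross product; its sign tells on which side of the line through a with
  direction d the point a + w lies.\<close>
definition cross2 :: "pt \<Rightarrow> pt \<Rightarrow> real" where
  "cross2 d w = d$1 * w$2 - d$2 * w$1"

definition turn :: "pt list \<Rightarrow> nat \<Rightarrow> real" where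
  "turn ps i = vec_angle (ps!i - ps!(i-1)) (ps!(i+1) - ps!i)"

definition edge_len :: "pt list \<Rightarrow> nat \<Rightarrow> real" where
  "edge_len ps i = dist (ps!i) (ps!(i+1))"

text \<open>Edge i (having an adjacent edge at each end, i.e. 0 < i and i+2 < length ps)
  is an inflection edge if its two adjacent edges lie (strictly) on opposite sides of
  its supporting line.\<close>
definition inflection_edge :: "pt list \<Rightarrow> nat \<Rightarrow> bool" where
  "inflection_edge ps i \<longleftrightarrow>
     cross2 (ps!(i+1) - ps!i) (ps!(i-1) - ps!i) * cross2 (ps!(i+1) - ps!i) (ps!(i+2) - ps!i) < 0"

definition polygonal_path :: "pt list \<Rightarrow> bool" where
  "polygonal_path ps \<longleftrightarrow> ps \<noteq> [] \<and> (\<forall>i. i + 1 < length ps \<longrightarrow> ps!i \<noteq> ps!(i+1))"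

definition dcc_path :: "real \<Rightarrow> real \<Rightarrow> pt list \<Rightarrow> bool" where
  "dcc_path \<theta> l ps \<longleftrightarrow> polygonal_path ps
     \<and> (\<forall>i. 0 < i \<and> i + 1 < length ps \<longrightarrow> turn ps i \<le> \<theta>)
     \<and> (\<forall>i. i + 2 < length ps \<longrightarrow> \<not> (edge_len ps i < l \<and> edge_len ps (i+1) < l))
     \<and> (\<forall>i. 0 < i \<and> i + 2 < length ps \<and> edge_len ps i < l \<and> \<not> inflection_edge ps i \<longrightarrow>
           vec_angle (ps!i - ps!(i-1)) (ps!(i+2) - ps!(i+1)) \<le> \<theta>)"

definition nonzero_turns :: "pt list \<Rightarrow> bool" where
  "nonzero_turns ps \<longleftrightarrow> (\<forall>i. 0 < i \<and> i + 1 < length ps \<longrightarrow> turn ps i \<noteq> 0)"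

definition path_length :: "pt list \<Rightarrow> real" where
  "path_length ps = (\<Sum>i<length ps - 1. edge_len ps i)"

definition starts_at :: "real \<Rightarrow> real \<Rightarrow> pt list \<Rightarrow> pt \<Rightarrow> pt \<Rightarrow> bool" where
  "starts_at \<theta> l ps u U \<longleftrightarrow> ps \<noteq> [] \<and> hd ps = u \<and> dcc_path \<theta> l ((u - U) # ps)"

definition ends_at :: "real \<Rightarrow> real \<Rightarrow> pt list \<Rightarrow> pt \<Rightarrow> pt \<Rightarrow> bool" where
  "ends_at \<theta> l ps v V \<longleftrightarrow> ps \<noteq> [] \<and> last ps = v \<and> dcc_path \<theta> l (ps @ [v + V])"

definition discrete_dubins :: "real \<Rightarrow> real \<Rightarrow> pt \<Rightarrow> pt \<Rightarrow> pt \<Rightarrow> pt \<Rightarrow> pt list \<Rightarrow> bool" where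
  "discrete_dubins \<theta> l u U v V ps \<longleftrightarrow>
     norm U = l \<and> norm V = l \<and>
     dcc_path \<theta> l ps \<and> starts_at \<theta> l ps u U \<and> ends_at \<theta> l ps v V \<and>
     (\<forall>qs. dcc_path \<theta> l qs \<and> starts_at \<theta> l qs u U \<and> ends_at \<theta> l qs v V
            \<longrightarrow> path_length ps \<le> path_length qs)"

definition shift_after :: "pt list \<Rightarrow> nat \<Rightarrow> real \<Rightarrow> pt list" where
  "shift_after ps i eps =
     take (i+1) ps @ map (\<lambda>p. p + eps *\<^sub>R (ps!i - ps!(i+1))) (drop (i+1) ps)"

end

theory Submission
  imports Defs
begin

text \<open>Shifting the tail of the path towards a along ab shortens the edge ab and leaves every
  other edge vector unchanged. All conditions defining a discrete curvature-constrained path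
  depend only on the directions of the edge vectors (turns, angles, sides of supporting lines)
  and on which edges are short, so they survive any positive rescaling of the individual edges
  that does not change shortness; since ab is long, a small enough shift keeps it long.\<close>

lemma vec_angle_scaleR_left: "a > 0 \<Longrightarrow> vec_angle (a *\<^sub>R u) v = vec_angle u v"
  by (simp add: vec_angle_def mult.assoc)

lemma vec_angle_scaleR_right: "a > 0 \<Longrightarrow> vec_angle u (a *\<^sub>R v) = vec_angle u v"
  by (simp add: vec_angle_def mult.assoc mult.left_commute[of a])

lemma cross2_scaleR_left [simp]: "cross2 (a *\<^sub>R u) w = a * cross2 u w"
  by (simp add: cross2_def algebra_simps)

lemma cross2_scaleR_right [simp]: "cross2 u (a *\<^sub>R w) = a * cross2 u w"
  by (simp add: cross2_def algebra_simps)

lemma cross2_add_right [simp]: "cross2 u (v + w) = cross2 u v + cross2 u w"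
  by (simp add: cross2_def algebra_simps)

lemma cross2_minus_right [simp]: "cross2 u (- w) = - cross2 u w"
  by (simp add: cross2_def algebra_simps)

lemma cross2_self [simp]: "cross2 u u = 0"
  by (simp add: cross2_def algebra_simps)

lemma edge_len_eq_norm: "edge_len ps k = norm (ps!(k+1) - ps!k)"
  by (simp add: edge_len_def dist_norm norm_minus_commute)

definition edges_rescaled :: "pt list \<Rightarrow> pt list \<Rightarrow> (nat \<Rightarrow> real) \<Rightarrow> bool" where
  "edges_rescaled ps qs f \<longleftrightarrow> length qs = length ps \<and>
     (\<forall>k. k + 1 < length ps \<longrightarrow> 0 < f k \<and> qs!(k+1) - qs!k = f k *\<^sub>R (ps!(k+1) - ps!k))"

lemma edges_rescaledD:
  assumes "edges_rescaled ps qs f" "k + 1 < length ps"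
  shows "0 < f k" "qs!(k+1) - qs!k = f k *\<^sub>R (ps!(k+1) - ps!k)"
  using assms by (auto simp: edges_rescaled_def)

lemma edges_rescaled_prevD:
  assumes "edges_rescaled ps qs f" "0 < j" "j < length ps"
  shows "0 < f (j-1)" "qs!j - qs!(j-1) = f (j-1) *\<^sub>R (ps!j - ps!(j-1))"
  using edges_rescaledD[OF assms(1), of "j-1"] assms(2,3) by simp_all

lemma edge_len_edges_rescaled:
  assumes "edges_rescaled ps qs f" "k + 1 < length ps"
  shows "edge_len qs k = f k * edge_len ps k"
  using edges_rescaledD[OF assms] by (simp add: edge_len_eq_norm)

lemma polygonal_path_edges_rescaled:
  assumes "edges_rescaled ps qs f" "polygonal_path ps"
  shows "polygonal_path qs"
  unfolding polygonal_path_def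
proof (intro conjI allI impI)
  have len: "length qs = length ps" using assms(1) by (simp add: edges_rescaled_def)
  then show "qs \<noteq> []" using assms(2) by (auto simp: polygonal_path_def)
  fix k assume k: "k + 1 < length qs"
  have "ps!(k+1) - ps!k \<noteq> 0" using assms(2) k len by (auto simp: polygonal_path_def)
  then have "qs!(k+1) - qs!k \<noteq> 0"
    using edges_rescaledD[OF assms(1), of k] k len by auto
  then show "qs!k \<noteq> qs!(k+1)" by simp
qed

lemma turn_edges_rescaled:
  assumes "edges_rescaled ps qs f" "0 < j" "j + 1 < length ps"
  shows "turn qs j = turn ps j"
  using edges_rescaledD[OF assms(1,3)] edges_rescaled_prevD[OF assms(1,2)] assms(3)
  by (simp add: turn_def vec_angle_scaleR_left vec_angle_scaleR_right)

lemma vec_angle_around_edge_edges_rescaled: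
  assumes "edges_rescaled ps qs f" "0 < j" "j + 2 < length ps"
  shows "vec_angle (qs!j - qs!(j-1)) (qs!(j+2) - qs!(j+1))
       = vec_angle (ps!j - ps!(j-1)) (ps!(j+2) - ps!(j+1))"
  using edges_rescaledD[OF assms(1), of "j+1"] edges_rescaled_prevD[OF assms(1,2)] assms(3)
  by (simp add: add.assoc vec_angle_scaleR_left vec_angle_scaleR_right)

lemma cross2_product_scaleR:
  "cross2 (c1 *\<^sub>R B) (- (c0 *\<^sub>R A)) * cross2 (c1 *\<^sub>R B) (c1 *\<^sub>R B + c2 *\<^sub>R C)
     = (c1 * c1 * c0 * c2) * (cross2 B (- A) * cross2 B (B + C))"
  by (simp add: algebra_simps)

lemma inflection_edge_edges_rescaled:
  assumes resc: "edges_rescaled ps qs f" and j: "0 < j" "j + 2 < length ps"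
  shows "inflection_edge qs j = inflection_edge ps j"
proof -
  let ?D0 = "ps!j - ps!(j-1)" and ?D1 = "ps!(j+1) - ps!j" and ?D2 = "ps!(j+2) - ps!(j+1)"
  have q0: "qs!(j-1) - qs!j = - (f (j-1) *\<^sub>R ?D0)"
    using edges_rescaled_prevD(2)[OF resc j(1)] j(2) by (metis add_lessD1 minus_diff_eq)
  have q1: "qs!(j+1) - qs!j = f j *\<^sub>R ?D1"
    using edges_rescaledD(2)[OF resc] j(2) by simp
  have q2: "qs!(j+2) - qs!(j+1) = f (j+1) *\<^sub>R ?D2"
    using edges_rescaledD(2)[OF resc, of "j+1"] j(2) by (simp add: add.assoc)
  have q12: "qs!(j+2) - qs!j = f j *\<^sub>R ?D1 + f (j+1) *\<^sub>R ?D2"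
    unfolding q1[symmetric] q2[symmetric] by simp
  have "ps!(j-1) - ps!j = - ?D0" "ps!(j+2) - ps!j = ?D1 + ?D2" by simp_all
  then have "cross2 (qs!(j+1) - qs!j) (qs!(j-1) - qs!j) * cross2 (qs!(j+1) - qs!j) (qs!(j+2) - qs!j)
      = (f j * f j * f (j-1) * f (j+1)) *
        (cross2 ?D1 (ps!(j-1) - ps!j) * cross2 ?D1 (ps!(j+2) - ps!j))"
    unfolding q0 q1 q12 by (simp only: cross2_product_scaleR)
  moreover have "0 < f j * f j * f (j-1) * f (j+1)"
    using edges_rescaledD(1)[OF resc, of j] edges_rescaledD(1)[OF resc, of "j+1"]
      edges_rescaled_prevD(1)[OF resc j(1)] j(2) by simp
  ultimately show ?thesis
    unfolding inflection_edge_def by (metis mult_less_cancel_left_pos mult_zero_right)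
qed

lemma dcc_path_edges_rescaled:
  assumes resc: "edges_rescaled ps qs f" and dcc: "dcc_path \<theta> l ps"
    and short: "\<And>k. k + 1 < length ps \<Longrightarrow> (edge_len qs k < l) = (edge_len ps k < l)"
  shows "dcc_path \<theta> l qs"
proof -
  have len: "length qs = length ps" using resc by (simp add: edges_rescaled_def)
  show ?thesis
    unfolding dcc_path_def
  proof (intro conjI allI impI)
    show "polygonal_path qs"
      using polygonal_path_edges_rescaled[OF resc] dcc by (simp add: dcc_path_def)
  next
    fix j assume "0 < j \<and> j + 1 < length qs"
    then show "turn qs j \<le> \<theta>"
      using turn_edges_rescaled[OF resc] dcc len by (auto simp: dcc_path_def)
  next
    fix j assume "j + 2 < length qs"
    then show "\<not> (edge_len qs j < l \<and> edge_len qs (j+1) < l)"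
      using dcc len short[of j] short[of "j+1"] by (auto simp: dcc_path_def)
  next
    fix j assume "0 < j \<and> j + 2 < length qs \<and> edge_len qs j < l \<and> \<not> inflection_edge qs j"
    then show "vec_angle (qs!j - qs!(j-1)) (qs!(j+2) - qs!(j+1)) \<le> \<theta>"
      using vec_angle_around_edge_edges_rescaled[OF resc] inflection_edge_edges_rescaled[OF resc]
        short[of j] dcc len
      by (auto simp: dcc_path_def)
  qed
qed

lemma nth_shift_after:
  assumes "i + 1 < length ps" "k < length ps"
  shows "shift_after ps i e ! k = (if k \<le> i then ps!k else ps!k + e *\<^sub>R (ps!i - ps!(i+1)))"
  using assms by (auto simp: shift_after_def nth_append min_def)

lemma edges_rescaled_shift_after:
  assumes "i + 1 < length ps" "e < 1"
  shows "edges_rescaled ps (shift_after ps i e) (\<lambda>k. if k = i then 1 - e else 1)"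
  unfolding edges_rescaled_def
proof (intro conjI allI impI)
  show "length (shift_after ps i e) = length ps"
    using assms(1) by (simp add: shift_after_def)
  fix k assume k: "k + 1 < length ps"
  show "0 < (if k = i then 1 - e else 1)" using assms(2) by simp
  show "shift_after ps i e ! (k+1) - shift_after ps i e ! k
      = (if k = i then 1 - e else 1) *\<^sub>R (ps!(k+1) - ps!k)"
    using k assms(1) by (cases "k < i"; cases "k = i") (auto simp: nth_shift_after algebra_simps)
qed

lemma dcc_path_shift_after:
  assumes dcc: "dcc_path \<theta> l ps" and i: "i + 1 < length ps"
    and e: "0 \<le> e" "e < 1" and long: "l \<le> (1 - e) * edge_len ps i"
  shows "dcc_path \<theta> l (shift_after ps i e)"
proof (rule dcc_path_edges_rescaled[OF edges_rescaled_shift_after[OF i e(2)] dcc])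
  fix k assume "k + 1 < length ps"
  then have "edge_len (shift_after ps i e) k = (if k = i then 1 - e else 1) * edge_len ps k"
    by (rule edge_len_edges_rescaled[OF edges_rescaled_shift_after[OF i e(2)]])
  moreover have "0 \<le> edge_len ps i" by (simp add: edge_len_def)
  then have "l \<le> edge_len ps i"
    using long e mult_left_le_one_le[of "edge_len ps i" "1 - e"] by linarith
  ultimately show "(edge_len (shift_after ps i e) k < l) = (edge_len ps k < l)"
    using long by auto
qed

theorem lemma6:
  fixes \<theta> l :: real and u U v V :: pt and ps :: "pt list" and i :: nat
  assumes "0 < \<theta>" and "\<theta> \<le> pi / 2" and "2 * pi / \<theta> \<in> \<int>" and "0 < l"
    and "discrete_dubins \<theta> l u U v V ps"
    and "nonzero_turns ps"
    and "i + 1 < length ps" and "edge_len ps i > l"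
  shows "\<exists>eps>0. eps \<le> 1 \<and> dcc_path \<theta> l (shift_after ps i eps)"
proof -
  define L where "L = edge_len ps i"
  define eps where "eps = (L - l) / (2 * L)"
  have "l < L" "0 < L" using assms(4,8) by (simp_all add: L_def)
  with assms(4) have "0 < eps" "eps \<le> 1/2" "l \<le> (1 - eps) * L"
    unfolding eps_def by (simp_all add: field_simps)
  moreover have "dcc_path \<theta> l ps" using assms(5) by (simp add: discrete_dubins_def)
  ultimately have "dcc_path \<theta> l (shift_after ps i eps)"
    using dcc_path_shift_after[OF _ assms(7)] unfolding L_def by simp
  with \<open>0 < eps\<close> \<open>eps \<le> 1/2\<close> show ?thesis by (intro exI[of _ eps]) simp
qed

end
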